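(* In the timely decision problem described in the context, fix $\eta$ and $\nu\in\{0,1\}$. Let $Q^*(\mu,\nu;\eta)=\inf_{\lambda\in\Lambda}Q^*_\lambda(\mu,\nu;\eta)$ and $\bar Q(\mu,\nu;\eta)=\inf_{\hat\theta\in\Theta}\bar Q_{\hat\theta}(\mu,\nu;\eta)$, and let $m_\theta\in\Delta(\Theta)$ denote the vertex (point mass) at $\theta$. Then $\mu\mapsto Q^*(\mu,\nu;\eta)$ is concave on $\Delta(\Theta)$, and $Q^*(m_\theta,\nu;\eta)>\bar Q(m_\theta,\nu;\eta)$ for every $\theta\in\Theta$. Hence the termination set $\mathcal{T}(\eta)=\{\mu\in\Delta(\Theta):Q^*(\mu,\nu;\eta)\ge\bar Q(\mu,\nu;\eta)\}$ is the (disjoint) union of $|\Theta|$ convex regions delimited by the intersection of $Q^*$ and $\bar Q$, and it contains each vertex of the simplex; the (possibly empty) continuation set is its complement $\Delta(\Theta)\setminus\mathcal{T}(\eta)$.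
   Context: $\Theta,\Lambda,\Omega$ finite nonempty; $\Delta(\Theta)$ the simplex. For $\theta\in\Theta,\lambda\in\Lambda$: known distributions $q_{\theta,\lambda}$ on $\Omega$ and $p_{\theta,\lambda}\in(0,1)$. Latent $\theta\sim\mu_0$. Survival $\nu_t$, $\nu_0=1$. At time $t$ with $\nu_t=1$ the agent either commits to a decision $\hat\theta\in\Theta$ (time $\sigma=t$) or performs $\lambda_t\in\Lambda$; given $\theta$, $\nu_{t+1}=0$ w.p. $p_{\theta,\lambda_t}$, else $\nu_{t+1}=1$ and $\omega_{t+1}\sim q_{\theta,\lambda_t}$ is observed. Deadline $\delta=\min\{t:\nu_t=0\}$, $\tau=\min\{\delta,\sigma\}$. Posterior updates: $M(\lambda,\mu,\omega)(\theta)\propto(1-p_{\theta,\lambda})q_{\theta,\lambda}(\omega)\mu(\theta)$ after survival and outcome $\omega$, $\bar M(\lambda,\mu)(\theta)\propto p_{\theta,\lambda}\mu(\theta)$ after death. Costs $c_\lambda>0$; weights $\eta=(\eta_a,\eta_b,\eta_c)$ with positive entries indexed by $\Theta,\Theta,\Lambda$. Loss $\ell=\sum_{\theta'}\eta_{a,\theta'}\mathbf 1\{\theta=\theta',\theta\neq\hat\theta,\tau<\delta\}+\sum_{\theta'}\eta_{b,\theta'}\mathbf 1\{\theta=\theta',\tau=\delta\}+\sum_{t<\tau}\eta_{c,\lambda_t}c_{\lambda_t}$. Strategies map $(\mu_t,\nu_t)$ to distributions on $\Lambda\cup\Theta$; $V^*(\mu,\nu;\eta)$ is the infimum over strategies of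 the expected to-go loss (loss minus already incurred acquisition costs) from posterior $\mu$ and survival state $\nu$. Decision factors: $\bar Q_{\hat\theta}(\mu,\nu;\eta)=(1-\nu)\sum_{\theta'}\eta_{b,\theta'}\mu(\theta')+\nu\sum_{\theta'\neq\hat\theta}\eta_{a,\theta'}\mu(\theta')$. Optimal acquisition factors: $Q^*_\lambda(\mu,\nu;\eta)=(1-\nu)V^*(\mu,0;\eta)+\eta_{c,\lambda}c_\lambda+\nu\big(V^*(\bar M(\lambda,\mu),0;\eta)\sum_{\theta'}p_{\theta',\lambda}\mu(\theta')+\sum_{\omega}V^*(M(\lambda,\mu,\omega),1;\eta)\sum_{\theta'}(1-p_{\theta',\lambda})q_{\theta',\lambda}(\omega)\mu(\theta')\big)$. *)

theory Defs
  imports "HOL-Analysis.Analysis" "HOL-Probability.Probability"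
begin

text \<open>Latent state type 'th (= Theta), acquisition actions 'la (= Lambda),
  outcomes 'om (= Omega), all finite (and automatically nonempty). Parameters:
  p :: 'th => 'la => real  (death probability p_{theta,lambda}),
  q :: 'th => 'la => 'om pmf  (outcome distribution q_{theta,lambda}),
  c :: 'la => real  (acquisition cost), and weights ea, eb :: 'th => real, ec :: 'la => real
  (the components eta_a, eta_b, eta_c of eta).  The survival state nu is a nat (0 or 1).\<close>

definition belief_simplex :: "(real^'th::finite) set" where
  "belief_simplex = {mu. (\<forall>i. 0 \<le> mu $ i) \<and> (\<Sum>i\<in>UNIV. mu $ i) = 1}"

definition vertex :: "'th::finite \<Rightarrow> real^'th" where
  "vertex th = axis th 1"

text \<open>Posterior after survival with outcome om, and after death.\<close>
definition Mpost :: "('th::finite \<Rightarrow> 'la \<Rightarrow> real) \<Rightarrow> ('th \<Rightarrow> 'la \<Rightarrow> 'om pmf)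
    \<Rightarrow> 'la \<Rightarrow> real^'th \<Rightarrow> 'om \<Rightarrow> real^'th" where
  "Mpost p q l mu om = (\<chi> th. (1 - p th l) * pmf (q th l) om * mu $ th /
      (\<Sum>th'\<in>UNIV. (1 - p th' l) * pmf (q th' l) om * mu $ th'))"

definition Mbar :: "('th::finite \<Rightarrow> 'la \<Rightarrow> real) \<Rightarrow> 'la \<Rightarrow> real^'th \<Rightarrow> real^'th" where
  "Mbar p l mu = (\<chi> th. p th l * mu $ th / (\<Sum>th'\<in>UNIV. p th' l * mu $ th'))"

text \<open>A (stationary, randomized) strategy maps the posterior and survival state to a
  distribution over actions: Inl lambda = acquire with lambda, Inr theta-hat = commit to theta-hat.\<close>
type_synonym ('th, 'la) strategy = "real^'th \<Rightarrow> nat \<Rightarrow> ('la + 'th) pmf"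

text \<open>Process state: (true theta, current posterior, survival state, stopped-flag).\<close>
definition step :: "('th::finite \<Rightarrow> 'la \<Rightarrow> real) \<Rightarrow> ('th \<Rightarrow> 'la \<Rightarrow> 'om pmf) \<Rightarrow> ('la \<Rightarrow> real)
    \<Rightarrow> ('th \<Rightarrow> real) \<Rightarrow> ('th \<Rightarrow> real) \<Rightarrow> ('la \<Rightarrow> real) \<Rightarrow> ('th, 'la) strategy
    \<Rightarrow> 'th \<times> (real^'th) \<times> nat \<times> bool \<Rightarrow> (real \<times> ('th \<times> (real^'th) \<times> nat \<times> bool)) pmf" where
  "step p q c ea eb ec \<pi> s = (case s of (th, mu, nu, dn) \<Rightarrow>
     if dn then return_pmf (0, (th, mu, nu, True))
     else if nu = 0 then return_pmf (eb th, (th, mu, nu, True))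
     else \<pi> mu nu \<bind> (\<lambda>a. case a of
         Inr th' \<Rightarrow> return_pmf (if th = th' then 0 else ea th, (th, mu, nu, True))
       | Inl l \<Rightarrow> bernoulli_pmf (p th l) \<bind> (\<lambda>d.
           if d then return_pmf (ec l * c l, (th, Mbar p l mu, 0, False))
           else map_pmf (\<lambda>om. (ec l * c l, (th, Mpost p q l mu om, 1, False))) (q th l))))"

primrec state_dist :: "('th::finite \<Rightarrow> 'la \<Rightarrow> real) \<Rightarrow> ('th \<Rightarrow> 'la \<Rightarrow> 'om pmf) \<Rightarrow> ('la \<Rightarrow> real)
    \<Rightarrow> ('th \<Rightarrow> real) \<Rightarrow> ('th \<Rightarrow> real) \<Rightarrow> ('la \<Rightarrow> real) \<Rightarrow> ('th, 'la) strategy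
    \<Rightarrow> 'th \<times> (real^'th) \<times> nat \<times> bool \<Rightarrow> nat \<Rightarrow> ('th \<times> (real^'th) \<times> nat \<times> bool) pmf" where
  "state_dist p q c ea eb ec \<pi> s 0 = return_pmf s"
| "state_dist p q c ea eb ec \<pi> s (Suc t) =
     state_dist p q c ea eb ec \<pi> s t \<bind> (\<lambda>s'. map_pmf snd (step p q c ea eb ec \<pi> s'))"

definition loss_given :: "('th::finite \<Rightarrow> 'la \<Rightarrow> real) \<Rightarrow> ('th \<Rightarrow> 'la \<Rightarrow> 'om pmf) \<Rightarrow> ('la \<Rightarrow> real)
    \<Rightarrow> ('th \<Rightarrow> real) \<Rightarrow> ('th \<Rightarrow> real) \<Rightarrow> ('la \<Rightarrow> real) \<Rightarrow> ('th, 'la) strategy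
    \<Rightarrow> 'th \<times> (real^'th) \<times> nat \<times> bool \<Rightarrow> ennreal" where
  "loss_given p q c ea eb ec \<pi> s = (\<Sum>t. ennreal (measure_pmf.expectation
      (state_dist p q c ea eb ec \<pi> s t)
      (\<lambda>s'. measure_pmf.expectation (step p q c ea eb ec \<pi> s') fst)))"

definition togo :: "('th::finite \<Rightarrow> 'la \<Rightarrow> real) \<Rightarrow> ('th \<Rightarrow> 'la \<Rightarrow> 'om pmf) \<Rightarrow> ('la \<Rightarrow> real)
    \<Rightarrow> ('th \<Rightarrow> real) \<Rightarrow> ('th \<Rightarrow> real) \<Rightarrow> ('la \<Rightarrow> real) \<Rightarrow> ('th, 'la) strategy
    \<Rightarrow> real^'th \<Rightarrow> nat \<Rightarrow> ennreal" where
  "togo p q c ea eb ec \<pi> mu nu =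
     (\<Sum>th\<in>UNIV. ennreal (mu $ th) * loss_given p q c ea eb ec \<pi> (th, mu, nu, False))"

text \<open>Optimal value V^*(mu,nu;eta): infimum over strategies (finite, bounded by max eta_a).\<close>
definition Vstar :: "('th::finite \<Rightarrow> 'la \<Rightarrow> real) \<Rightarrow> ('th \<Rightarrow> 'la \<Rightarrow> 'om pmf) \<Rightarrow> ('la \<Rightarrow> real)
    \<Rightarrow> ('th \<Rightarrow> real) \<Rightarrow> ('th \<Rightarrow> real) \<Rightarrow> ('la \<Rightarrow> real) \<Rightarrow> real^'th \<Rightarrow> nat \<Rightarrow> real" where
  "Vstar p q c ea eb ec mu nu = enn2real (INF \<pi>. togo p q c ea eb ec \<pi> mu nu)"

definition Qbar_dec :: "('th::finite \<Rightarrow> real) \<Rightarrow> ('th \<Rightarrow> real) \<Rightarrow> 'th \<Rightarrow> real^'th \<Rightarrow> nat \<Rightarrow> real" where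
  "Qbar_dec ea eb thh mu nu = (1 - real nu) * (\<Sum>th'\<in>UNIV. eb th' * mu $ th')
      + real nu * (\<Sum>th'\<in>UNIV - {thh}. ea th' * mu $ th')"

definition Qstar_acq :: "('th::finite \<Rightarrow> 'la \<Rightarrow> real) \<Rightarrow> ('th \<Rightarrow> 'la \<Rightarrow> 'om::finite pmf) \<Rightarrow> ('la \<Rightarrow> real)
    \<Rightarrow> ('th \<Rightarrow> real) \<Rightarrow> ('th \<Rightarrow> real) \<Rightarrow> ('la \<Rightarrow> real) \<Rightarrow> 'la \<Rightarrow> real^'th \<Rightarrow> nat \<Rightarrow> real" where
  "Qstar_acq p q c ea eb ec l mu nu =
     (1 - real nu) * Vstar p q c ea eb ec mu 0 + ec l * c l
     + real nu * (Vstar p q c ea eb ec (Mbar p l mu) 0 * (\<Sum>th'\<in>UNIV. p th' l * mu $ th')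
        + (\<Sum>om\<in>UNIV. Vstar p q c ea eb ec (Mpost p q l mu om) 1
              * (\<Sum>th'\<in>UNIV. (1 - p th' l) * pmf (q th' l) om * mu $ th')))"

definition Qstar :: "('th::finite \<Rightarrow> 'la::finite \<Rightarrow> real) \<Rightarrow> ('th \<Rightarrow> 'la \<Rightarrow> 'om::finite pmf) \<Rightarrow> ('la \<Rightarrow> real)
    \<Rightarrow> ('th \<Rightarrow> real) \<Rightarrow> ('th \<Rightarrow> real) \<Rightarrow> ('la \<Rightarrow> real) \<Rightarrow> real^'th \<Rightarrow> nat \<Rightarrow> real" where
  "Qstar p q c ea eb ec mu nu = (INF l. Qstar_acq p q c ea eb ec l mu nu)"

definition Qbar :: "('th::finite \<Rightarrow> real) \<Rightarrow> ('th \<Rightarrow> real) \<Rightarrow> real^'th \<Rightarrow> nat \<Rightarrow> real" where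
  "Qbar ea eb mu nu = (INF thh. Qbar_dec ea eb thh mu nu)"

definition termination_set :: "('th::finite \<Rightarrow> 'la::finite \<Rightarrow> real) \<Rightarrow> ('th \<Rightarrow> 'la \<Rightarrow> 'om::finite pmf)
    \<Rightarrow> ('la \<Rightarrow> real) \<Rightarrow> ('th \<Rightarrow> real) \<Rightarrow> ('th \<Rightarrow> real) \<Rightarrow> ('la \<Rightarrow> real) \<Rightarrow> nat \<Rightarrow> (real^'th) set" where
  "termination_set p q c ea eb ec nu =
     {mu \<in> belief_simplex. Qstar p q c ea eb ec mu nu \<ge> Qbar ea eb mu nu}"

end

theory Submission
  imports Defs
begin

text \<open>
  For fixed survival state the optimal value \<open>V\<^sup>*\<close> is the increasing limit of value iteration
  started from zero, and the greedy strategy for that limit attains it. Every iterate is concave in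
  the belief: the deadline loss is linear, and the Bellman operator preserves concavity, because the
  probability of an observation times the continuation value at the Bayes posterior is a
  perspective of the continuation value, and a minimum of finitely many concave functions is
  concave. Hence each \<open>Q\<^sup>*\<^sub>\<lambda>\<close> and their minimum \<open>Q\<^sup>*\<close> are concave, and the set where \<open>Q\<^sup>*\<close>
  dominates the linear decision factor of a fixed \<open>\<theta>\<close> is convex.
\<close>

lemma expectation_bind_pmf_finite:
  fixes h :: "'b \<Rightarrow> real"
  assumes "finite (set_pmf M)" and "\<And>x. x \<in> set_pmf M \<Longrightarrow> finite (set_pmf (N x))"
  shows "measure_pmf.expectation (M \<bind> N) h
       = measure_pmf.expectation M (\<lambda>x. measure_pmf.expectation (N x) h)"
  using assms by (simp add: pmf_expectation_bind[of "set_pmf M"] integral_measure_pmf[of "set_pmf M"])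

lemma expectation_finite_type:
  fixes h :: "'a::finite \<Rightarrow> real"
  shows "measure_pmf.expectation M h = (\<Sum>a\<in>UNIV. pmf M a * h a)"
  by (subst integral_measure_pmf[of UNIV]) auto

lemma Min_range_le_pmf_average:
  fixes x :: "'a::finite \<Rightarrow> real"
  shows "Min (range x) \<le> (\<Sum>a\<in>UNIV. pmf M a * x a)"
proof -
  have "Min (range x) = (\<Sum>a\<in>UNIV. pmf M a * Min (range x))"
    by (simp add: sum_distrib_right[symmetric] sum_pmf_eq_1)
  also have "\<dots> \<le> (\<Sum>a\<in>UNIV. pmf M a * x a)"
    by (intro sum_mono mult_left_mono) auto
  finally show ?thesis .
qed

lemma Min_range_mono:
  fixes f g :: "'a::finite \<Rightarrow> 'b::linorder"
  assumes "\<And>a. f a \<le> g a"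
  shows "Min (range f) \<le> Min (range g)"
proof -
  have "Min (range f) \<le> g a" for a
    by (rule order.trans[OF Min_le assms]) auto
  then show ?thesis by simp
qed

lemma tendsto_Min:
  fixes X :: "'i \<Rightarrow> 'a \<Rightarrow> 'b::linorder_topology"
  assumes "finite A" "A \<noteq> {}" "\<And>a. a \<in> A \<Longrightarrow> ((\<lambda>n. X n a) \<longlongrightarrow> L a) F"
  shows "((\<lambda>n. Min (X n ` A)) \<longlongrightarrow> Min (L ` A)) F"
  using assms by (induction A rule: finite_ne_induct) (auto intro!: tendsto_min)

lemma concave_on_cong:
  assumes "\<And>x. x \<in> S \<Longrightarrow> f x = g x"
  shows "concave_on S f \<longleftrightarrow> concave_on S g"
  using assms unfolding concave_on_iff by (metis (no_types, lifting) convexD)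

lemma concave_on_sum_fun:
  assumes "finite I" "convex S" "\<And>i. i \<in> I \<Longrightarrow> concave_on S (f i)"
  shows "concave_on S (\<lambda>x. \<Sum>i\<in>I. f i x)"
  using assms(1,3)
  by (induction I rule: finite_induct) (auto simp: concave_on_const assms(2) intro!: concave_on_add)

lemma concave_on_Min_range:
  fixes f :: "'a::finite \<Rightarrow> 'v::real_vector \<Rightarrow> real"
  assumes concave: "\<And>a. concave_on S (f a)"
  shows "concave_on S (\<lambda>x. Min (range (\<lambda>a. f a x)))"
  unfolding concave_on_iff
proof (intro conjI ballI allI impI concave_on_imp_convex[OF concave])
  fix x y :: 'v and u v :: real
  assume x: "x \<in> S" and y: "y \<in> S" and u: "0 \<le> u" and v: "0 \<le> v" and uv: "u + v = 1"
  have "Min (range (\<lambda>a. f a (u *\<^sub>R x + v *\<^sub>R y))) \<in> range (\<lambda>a. f a (u *\<^sub>R x + v *\<^sub>R y))"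
    by (rule Min_in) auto
  then obtain a where a: "Min (range (\<lambda>a. f a (u *\<^sub>R x + v *\<^sub>R y))) = f a (u *\<^sub>R x + v *\<^sub>R y)"
    by blast
  have "u * Min (range (\<lambda>a. f a x)) + v * Min (range (\<lambda>a. f a y)) \<le> u * f a x + v * f a y"
    using u v by (intro add_mono mult_left_mono) auto
  also have "\<dots> \<le> f a (u *\<^sub>R x + v *\<^sub>R y)"
    using concave[of a] x y u v uv unfolding concave_on_iff by blast
  finally show "u * Min (range (\<lambda>a. f a x)) + v * Min (range (\<lambda>a. f a y))
      \<le> Min (range (\<lambda>a. f a (u *\<^sub>R x + v *\<^sub>R y)))"
    using a by simp
qed

lemma concave_on_weighted_mean:
  assumes f: "concave_on S f" and "x \<in> S" "y \<in> S" "0 < a" "0 < b"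
  shows "a * f x + b * f y \<le> (a + b) * f ((a / (a + b)) *\<^sub>R x + (b / (a + b)) *\<^sub>R y)"
proof -
  have "a / (a + b) + b / (a + b) = 1"
    using assms by (simp add: add_divide_distrib[symmetric])
  then have "a / (a + b) * f x + b / (a + b) * f y \<le> f ((a / (a + b)) *\<^sub>R x + (b / (a + b)) *\<^sub>R y)"
    using f assms(2-) unfolding concave_on_iff
    by (metis divide_nonneg_pos less_eq_real_def add_pos_pos)
  then have "(a + b) * (a / (a + b) * f x + b / (a + b) * f y)
      \<le> (a + b) * f ((a / (a + b)) *\<^sub>R x + (b / (a + b)) *\<^sub>R y)"
    using assms by (intro mult_left_mono) auto
  then show ?thesis
    using assms by (simp add: distrib_left)
qed

lemma convex_Collect_convex_le_concave:
  assumes f: "concave_on S f" and g: "convex_on S g"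
  shows "convex {x \<in> S. g x \<le> f x}"
  unfolding convex_def
proof (intro ballI allI impI)
  fix x y and u v :: real
  assume x: "x \<in> {x \<in> S. g x \<le> f x}" and y: "y \<in> {x \<in> S. g x \<le> f x}"
    and u: "0 \<le> u" and v: "0 \<le> v" and uv: "u + v = 1"
  have "g (u *\<^sub>R x + v *\<^sub>R y) \<le> u * g x + v * g y"
    using g x y u v uv unfolding convex_on_def by blast
  also have "\<dots> \<le> u * f x + v * f y"
    using x y u v by (intro add_mono mult_left_mono) auto
  also have "\<dots> \<le> f (u *\<^sub>R x + v *\<^sub>R y)"
    using f x y u v uv unfolding concave_on_iff by blast
  finally show "u *\<^sub>R x + v *\<^sub>R y \<in> {x \<in> S. g x \<le> f x}"
    using convexD[OF concave_on_imp_convex[OF f]] x y u v uv by blast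
qed

lemma belief_simplex_nonneg: "mu \<in> belief_simplex \<Longrightarrow> 0 \<le> mu $ th"
  by (simp add: belief_simplex_def)

lemma belief_simplex_sum: "mu \<in> belief_simplex \<Longrightarrow> (\<Sum>th\<in>UNIV. mu $ th) = 1"
  by (simp add: belief_simplex_def)

lemma convex_belief_simplex: "convex belief_simplex"
  unfolding convex_def belief_simplex_def
  by (auto simp: sum.distrib simp flip: sum_distrib_left)

lemma vertex_nth: "vertex th $ i = (if i = th then 1 else 0)"
  by (simp add: vertex_def axis_def)

lemma vertex_in_belief_simplex: "vertex th \<in> belief_simplex"
  by (simp add: belief_simplex_def vertex_nth)

lemma Qbar_dec_combination:
  "Qbar_dec ea eb thh (u *\<^sub>R x + v *\<^sub>R y) nu = u * Qbar_dec ea eb thh x nu + v * Qbar_dec ea eb thh y nu"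
  by (simp add: Qbar_dec_def sum.distrib sum_distrib_left algebra_simps)

lemma concave_on_Qbar_dec: "concave_on belief_simplex (\<lambda>mu. Qbar_dec ea eb thh mu nu)"
  by (simp add: concave_on_iff Qbar_dec_combination convex_belief_simplex)

lemma convex_on_Qbar_dec: "convex_on belief_simplex (\<lambda>mu. Qbar_dec ea eb thh mu nu)"
  by (simp add: convex_on_def Qbar_dec_combination convex_belief_simplex)

definition bayes_norm :: "('th::finite \<Rightarrow> real) \<Rightarrow> real^'th \<Rightarrow> real" where
  "bayes_norm w mu = (\<Sum>th\<in>UNIV. w th * mu $ th)"

definition bayes_update :: "('th::finite \<Rightarrow> real) \<Rightarrow> real^'th \<Rightarrow> real^'th" where
  "bayes_update w mu = (\<chi> th. w th * mu $ th / bayes_norm w mu)"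

text \<open>If the likelihood \<open>w\<close> has probability zero under \<open>mu\<close>, then \<open>bayes_update w mu\<close> is the
  zero vector (division by zero), which lies outside the simplex; the factor \<open>bayes_norm w mu = 0\<close>
  makes this junk value harmless.\<close>
definition bayes_perspective ::
    "('th::finite \<Rightarrow> real) \<Rightarrow> (real^'th \<Rightarrow> real) \<Rightarrow> real^'th \<Rightarrow> real" where
  "bayes_perspective w f mu = bayes_norm w mu * f (bayes_update w mu)"

lemma bayes_norm_combination:
  "bayes_norm w (u *\<^sub>R x + v *\<^sub>R y) = u * bayes_norm w x + v * bayes_norm w y"
  by (simp add: bayes_norm_def sum.distrib sum_distrib_left algebra_simps)

context
  fixes w :: "'th::finite \<Rightarrow> real"
  assumes w_nonneg: "\<And>th. 0 \<le> w th"
begin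

lemma bayes_norm_nonneg: "mu \<in> belief_simplex \<Longrightarrow> 0 \<le> bayes_norm w mu"
  unfolding bayes_norm_def by (auto intro!: sum_nonneg mult_nonneg_nonneg w_nonneg belief_simplex_nonneg)

lemma bayes_norm_mult_update:
  assumes mu: "mu \<in> belief_simplex"
  shows "bayes_norm w mu * bayes_update w mu $ th = w th * mu $ th"
proof (cases "bayes_norm w mu = 0")
  case True
  then have "\<forall>th\<in>UNIV. w th * mu $ th = 0"
    unfolding bayes_norm_def
    by (subst sum_nonneg_eq_0_iff[symmetric]) (auto intro!: mult_nonneg_nonneg w_nonneg belief_simplex_nonneg[OF mu])
  then show ?thesis using True by simp
qed (simp add: bayes_update_def)

lemma bayes_update_in_simplex:
  assumes mu: "mu \<in> belief_simplex" and norm: "bayes_norm w mu \<noteq> 0"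
  shows "bayes_update w mu \<in> belief_simplex"
proof -
  have "0 < bayes_norm w mu" using bayes_norm_nonneg[OF mu] norm by simp
  then show ?thesis
    using w_nonneg belief_simplex_nonneg[OF mu]
    by (auto simp: belief_simplex_def bayes_update_def bayes_norm_def simp flip: sum_divide_distrib)
qed

lemma sum_mult_likelihood:
  assumes "mu \<in> belief_simplex"
  shows "(\<Sum>th\<in>UNIV. mu $ th * w th * F th)
       = bayes_norm w mu * (\<Sum>th\<in>UNIV. bayes_update w mu $ th * F th)"
proof -
  have "mu $ th * w th = bayes_norm w mu * bayes_update w mu $ th" for th
    using bayes_norm_mult_update[OF assms, of th] by (simp add: mult.commute)
  then show ?thesis by (simp add: sum_distrib_left mult.assoc)
qed

lemma bayes_perspective_mono:
  assumes mu: "mu \<in> belief_simplex" and le: "\<And>x. x \<in> belief_simplex \<Longrightarrow> f x \<le> g x"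
  shows "bayes_perspective w f mu \<le> bayes_perspective w g mu"
proof (cases "bayes_norm w mu = 0")
  case False
  then show ?thesis
    unfolding bayes_perspective_def
    by (intro mult_left_mono le bayes_update_in_simplex bayes_norm_nonneg mu)
qed (simp add: bayes_perspective_def)

lemma bayes_perspective_nonneg:
  "mu \<in> belief_simplex \<Longrightarrow> (\<And>x. x \<in> belief_simplex \<Longrightarrow> 0 \<le> f x) \<Longrightarrow> 0 \<le> bayes_perspective w f mu"
  using bayes_perspective_mono[of mu "\<lambda>_. 0" f] by (simp add: bayes_perspective_def)

lemma tendsto_bayes_perspective:
  assumes mu: "mu \<in> belief_simplex"
    and lim: "\<And>x. x \<in> belief_simplex \<Longrightarrow> (\<lambda>n. f n x) \<longlonglongrightarrow> g x"
  shows "(\<lambda>n. bayes_perspective w (f n) mu) \<longlonglongrightarrow> bayes_perspective w g mu"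
proof (cases "bayes_norm w mu = 0")
  case False
  then show ?thesis
    unfolding bayes_perspective_def
    by (intro tendsto_mult_left lim bayes_update_in_simplex mu)
qed (simp add: bayes_perspective_def)

lemma concave_on_bayes_perspective:
  assumes f: "concave_on belief_simplex f"
  shows "concave_on belief_simplex (bayes_perspective w f)"
  unfolding concave_on_iff
proof (intro conjI ballI allI impI convex_belief_simplex)
  fix x y :: "real^'th" and u v :: real
  assume x: "x \<in> belief_simplex" and y: "y \<in> belief_simplex"
    and u: "0 \<le> u" and v: "0 \<le> v" and uv: "u + v = 1"
  define m where "m = u *\<^sub>R x + v *\<^sub>R y"
  define a where "a = u * bayes_norm w x"
  define b where "b = v * bayes_norm w y"
  have m: "m \<in> belief_simplex"
    unfolding m_def using convexD[OF convex_belief_simplex x y u v uv] .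
  have a: "0 \<le> a" and b: "0 \<le> b"
    using u v bayes_norm_nonneg[OF x] bayes_norm_nonneg[OF y] by (simp_all add: a_def b_def)
  have norm_m: "bayes_norm w m = a + b"
    by (simp add: m_def a_def b_def bayes_norm_combination)
  have "(a + b) * bayes_update w m $ th = a * bayes_update w x $ th + b * bayes_update w y $ th"
    for th
  proof -
    have "(a + b) * bayes_update w m $ th = w th * m $ th"
      using bayes_norm_mult_update[OF m] by (simp add: norm_m)
    also have "\<dots> = u * (w th * x $ th) + v * (w th * y $ th)"
      by (simp add: m_def algebra_simps)
    also have "\<dots> = a * bayes_update w x $ th + b * bayes_update w y $ th"
      by (simp add: a_def b_def mult.assoc bayes_norm_mult_update x y)
    finally show ?thesis .
  qed
  then have update_m:
    "(a + b) *\<^sub>R bayes_update w m = a *\<^sub>R bayes_update w x + b *\<^sub>R bayes_update w y"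
    by (simp add: vec_eq_iff)
  have "a * f (bayes_update w x) + b * f (bayes_update w y) \<le> (a + b) * f (bayes_update w m)"
  proof (cases "a = 0 \<or> b = 0")
    case True
    then show ?thesis using update_m by auto
  next
    case False
    then have "0 < a" "0 < b" using a b by auto
    moreover have "bayes_update w x \<in> belief_simplex" "bayes_update w y \<in> belief_simplex"
      using False by (auto simp: a_def b_def intro!: bayes_update_in_simplex x y)
    moreover have "bayes_update w m
        = (a / (a + b)) *\<^sub>R bayes_update w x + (b / (a + b)) *\<^sub>R bayes_update w y"
    proof -
      have "bayes_update w m = inverse (a + b) *\<^sub>R ((a + b) *\<^sub>R bayes_update w m)"
        using \<open>0 < a\<close> \<open>0 < b\<close> by simp
      then show ?thesis by (simp add: update_m scaleR_add_right divide_inverse_commute)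
    qed
    ultimately show ?thesis by (simp add: concave_on_weighted_mean[OF f])
  qed
  then show "u * bayes_perspective w f x + v * bayes_perspective w f y \<le> bayes_perspective w f m"
    by (simp add: bayes_perspective_def norm_m a_def b_def mult.assoc)
qed

end

locale timely_decision_problem =
  fixes p :: "'th::finite \<Rightarrow> 'la::finite \<Rightarrow> real"
    and q :: "'th \<Rightarrow> 'la \<Rightarrow> 'om::finite pmf"
    and c :: "'la \<Rightarrow> real"
    and ea eb :: "'th \<Rightarrow> real" and ec :: "'la \<Rightarrow> real"
  assumes p_nonneg: "\<And>th l. 0 \<le> p th l" and p_le_1: "\<And>th l. p th l \<le> 1"
    and ea_nonneg: "\<And>th. 0 \<le> ea th" and eb_nonneg: "\<And>th. 0 \<le> eb th"
    and acquisition_cost_pos: "\<And>l. 0 < ec l * c l"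
begin

abbreviation "one_step \<equiv> step p q c ea eb ec"
abbreviation "state_after \<equiv> state_dist p q c ea eb ec"

definition death_lik :: "'la \<Rightarrow> 'th \<Rightarrow> real" where
  "death_lik l th = p th l"

definition outcome_lik :: "'la \<Rightarrow> 'om \<Rightarrow> 'th \<Rightarrow> real" where
  "outcome_lik l om th = (1 - p th l) * pmf (q th l) om"

lemma death_lik_nonneg: "0 \<le> death_lik l th"
  by (simp add: death_lik_def p_nonneg)

lemma outcome_lik_nonneg: "0 \<le> outcome_lik l om th"
  by (simp add: outcome_lik_def p_le_1)

lemma Mbar_eq_bayes_update: "Mbar p l mu = bayes_update (death_lik l) mu"
  by (simp add: Mbar_def bayes_update_def bayes_norm_def death_lik_def)

lemma Mpost_eq_bayes_update: "Mpost p q l mu om = bayes_update (outcome_lik l om) mu"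
  by (simp add: Mpost_def bayes_update_def bayes_norm_def outcome_lik_def)

lemma finite_set_pmf_one_step: "finite (set_pmf (one_step \<pi> s))"
  by (cases s) (auto simp: step_def set_bind_pmf split: sum.splits intro!: finite_UN_I)

lemma finite_set_pmf_state_after: "finite (set_pmf (state_after \<pi> s t))"
  by (induction t) (auto simp: set_bind_pmf finite_set_pmf_one_step intro!: finite_UN_I)

lemma state_after_Suc_first_step:
  "state_after \<pi> s (Suc t) = one_step \<pi> s \<bind> (\<lambda>x. state_after \<pi> (snd x) t)"
  by (induction t) (simp_all add: bind_return_pmf bind_assoc_pmf map_pmf_def)

lemma stage_loss_nonneg:
  assumes "x \<in> set_pmf (one_step \<pi> s)"
  shows "0 \<le> fst x"
proof -
  obtain th mu nu dn where s: "s = (th, mu, nu, dn)" by (cases s)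
  show ?thesis
    using assms acquisition_cost_pos[THEN less_imp_le] ea_nonneg eb_nonneg
    unfolding s step_def
    by (auto simp: set_bind_pmf split: if_splits) (auto split: sum.split_asm if_splits)
qed

definition partial_loss :: "('th, 'la) strategy \<Rightarrow> nat \<Rightarrow> 'th \<times> (real^'th) \<times> nat \<times> bool \<Rightarrow> real"
  where "partial_loss \<pi> n s = (\<Sum>t<n. measure_pmf.expectation (state_after \<pi> s t)
      (\<lambda>s'. measure_pmf.expectation (one_step \<pi> s') fst))"

lemma expected_stage_loss_nonneg:
  "0 \<le> measure_pmf.expectation (state_after \<pi> s t) (\<lambda>s'. measure_pmf.expectation (one_step \<pi> s') fst)"
  by (intro integral_nonneg_AE AE_pmfI AE_I2) (auto intro: stage_loss_nonneg)

lemma partial_loss_nonneg: "0 \<le> partial_loss \<pi> n s"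
  unfolding partial_loss_def by (intro sum_nonneg expected_stage_loss_nonneg)

lemma partial_loss_mono: "partial_loss \<pi> n s \<le> partial_loss \<pi> (Suc n) s"
  unfolding partial_loss_def by (simp add: expected_stage_loss_nonneg)

lemma loss_given_eq_SUP_partial_loss:
  "loss_given p q c ea eb ec \<pi> s = (SUP n. ennreal (partial_loss \<pi> n s))"
  unfolding loss_given_def partial_loss_def
  by (subst suminf_eq_SUP) (simp add: expected_stage_loss_nonneg)

lemma partial_loss_Suc:
  "partial_loss \<pi> (Suc n) s
     = measure_pmf.expectation (one_step \<pi> s) (\<lambda>x. fst x + partial_loss \<pi> n (snd x))"
proof -
  let ?e = "\<lambda>s'. measure_pmf.expectation (one_step \<pi> s') fst"
  have "partial_loss \<pi> (Suc n) s
      = ?e s + (\<Sum>t<n. measure_pmf.expectation (state_after \<pi> s (Suc t)) ?e)"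
    unfolding partial_loss_def by (subst sum.lessThan_Suc_shift) simp
  also have "(\<Sum>t<n. measure_pmf.expectation (state_after \<pi> s (Suc t)) ?e)
      = (\<Sum>t<n. measure_pmf.expectation (one_step \<pi> s)
          (\<lambda>x. measure_pmf.expectation (state_after \<pi> (snd x) t) ?e))"
    unfolding state_after_Suc_first_step
    by (intro sum.cong refl expectation_bind_pmf_finite finite_set_pmf_one_step
        finite_set_pmf_state_after)
  also have "\<dots> = measure_pmf.expectation (one_step \<pi> s) (\<lambda>x. partial_loss \<pi> n (snd x))"
    unfolding partial_loss_def
    by (simp add: integrable_measure_pmf_finite finite_set_pmf_one_step)
  also have "?e s + \<dots>
      = measure_pmf.expectation (one_step \<pi> s) (\<lambda>x. fst x + partial_loss \<pi> n (snd x))"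
    by (simp add: integrable_measure_pmf_finite finite_set_pmf_one_step)
  finally show ?thesis .
qed

lemma partial_loss_stopped [simp]: "partial_loss \<pi> n (th, mu, nu, True) = 0"
proof -
  have "state_after \<pi> (th, mu, nu, True) t = return_pmf (th, mu, nu, True)" for t
    by (induction t) (simp_all add: step_def bind_return_pmf)
  then show ?thesis by (simp add: partial_loss_def step_def)
qed

lemma partial_loss_Suc_deadline: "partial_loss \<pi> (Suc n) (th, mu, 0, False) = eb th"
  by (simp add: partial_loss_Suc step_def)

definition action_loss :: "('th, 'la) strategy \<Rightarrow> nat \<Rightarrow> 'th \<Rightarrow> real^'th \<Rightarrow> 'la + 'th \<Rightarrow> real"
  where "action_loss \<pi> n th mu a = (case a of
      Inl l \<Rightarrow> ec l * c l + p th l * partial_loss \<pi> n (th, Mbar p l mu, 0, False)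
        + (1 - p th l) * (\<Sum>om\<in>UNIV. pmf (q th l) om * partial_loss \<pi> n (th, Mpost p q l mu om, 1, False))
    | Inr thh \<Rightarrow> if th = thh then 0 else ea th)"

lemma partial_loss_Suc_alive:
  assumes "nu \<noteq> 0"
  shows "partial_loss \<pi> (Suc n) (th, mu, nu, False)
    = (\<Sum>a\<in>UNIV. pmf (\<pi> mu nu) a * action_loss \<pi> n th mu a)"
proof -
  let ?h = "\<lambda>x. fst x + partial_loss \<pi> n (snd x)"
  have acquire: "measure_pmf.expectation (bernoulli_pmf (p th l) \<bind> (\<lambda>d.
        if d then return_pmf (ec l * c l, th, Mbar p l mu, 0, False)
        else map_pmf (\<lambda>om. (ec l * c l, th, Mpost p q l mu om, 1, False)) (q th l))) ?h
      = action_loss \<pi> n th mu (Inl l)"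
    for l
  proof -
    have "measure_pmf.expectation (map_pmf (\<lambda>om. (ec l * c l, th, Mpost p q l mu om, 1, False)) (q th l)) ?h
        = ec l * c l + (\<Sum>om\<in>UNIV. pmf (q th l) om * partial_loss \<pi> n (th, Mpost p q l mu om, 1, False))"
      by (simp add: expectation_finite_type sum.distrib distrib_left sum_pmf_eq_1
          flip: sum_distrib_right)
    then show ?thesis
      using p_nonneg[of th l] p_le_1[of th l] unfolding action_loss_def
      by (subst pmf_expectation_bind[of UNIV]) (auto simp: UNIV_bool, simp add: algebra_simps)
  qed
  show ?thesis
    using assms
    by (simp add: partial_loss_Suc step_def, subst pmf_expectation_bind[of UNIV])
       (auto simp: acquire set_bind_pmf action_loss_def[of _ _ _ _ "Inr _"] intro!: sum.cong
        split: sum.split)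
qed

definition belief_loss :: "('th, 'la) strategy \<Rightarrow> nat \<Rightarrow> real^'th \<Rightarrow> nat \<Rightarrow> real" where
  "belief_loss \<pi> n mu nu = (\<Sum>th\<in>UNIV. mu $ th * partial_loss \<pi> n (th, mu, nu, False))"

definition deadline_loss :: "real^'th \<Rightarrow> real" where
  "deadline_loss mu = (\<Sum>th\<in>UNIV. eb th * mu $ th)"

text \<open>The Bellman factors at \<open>\<nu> = 1\<close> for the continuation value \<open>f\<close>; with \<open>f = V\<^sup>*\<close>,
  acquiring with \<open>\<lambda>\<close> gives \<open>Q\<^sup>*\<^sub>\<lambda>(\<mu>, 1)\<close>.\<close>
definition action_factor :: "(real^'th \<Rightarrow> nat \<Rightarrow> real) \<Rightarrow> real^'th \<Rightarrow> 'la + 'th \<Rightarrow> real" where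
  "action_factor f mu a = (case a of
      Inl l \<Rightarrow> ec l * c l + bayes_perspective (death_lik l) (\<lambda>x. f x 0) mu
        + (\<Sum>om\<in>UNIV. bayes_perspective (outcome_lik l om) (\<lambda>x. f x 1) mu)
    | Inr thh \<Rightarrow> Qbar_dec ea eb thh mu 1)"

lemma action_factor_commit [simp]: "action_factor f mu (Inr thh) = Qbar_dec ea eb thh mu 1"
  by (simp add: action_factor_def)

lemma belief_loss_0 [simp]: "belief_loss \<pi> 0 mu nu = 0"
  by (simp add: belief_loss_def partial_loss_def)

lemma belief_loss_Suc_deadline: "belief_loss \<pi> (Suc n) mu 0 = deadline_loss mu"
  by (simp add: belief_loss_def deadline_loss_def partial_loss_Suc_deadline mult.commute)

lemma belief_average_action_loss:
  assumes mu: "mu \<in> belief_simplex"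
  shows "(\<Sum>th\<in>UNIV. mu $ th * action_loss \<pi> n th mu a) = action_factor (belief_loss \<pi> n) mu a"
proof (cases a)
  case (Inl l)
  have "(\<Sum>th\<in>UNIV. mu $ th * action_loss \<pi> n th mu a)
      = ec l * c l * (\<Sum>th\<in>UNIV. mu $ th)
        + (\<Sum>th\<in>UNIV. mu $ th * death_lik l th * partial_loss \<pi> n (th, Mbar p l mu, 0, False))
        + (\<Sum>om\<in>UNIV. \<Sum>th\<in>UNIV. mu $ th * outcome_lik l om th
            * partial_loss \<pi> n (th, Mpost p q l mu om, 1, False))"
    by (simp add: Inl action_loss_def death_lik_def outcome_lik_def sum.distrib sum_distrib_left
        algebra_simps) (rule sum.swap)
  also have "\<dots> = action_factor (belief_loss \<pi> n) mu a"
    by (simp add: Inl action_factor_def belief_loss_def bayes_perspective_def belief_simplex_sum[OF mu]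
        Mbar_eq_bayes_update Mpost_eq_bayes_update sum_mult_likelihood[OF death_lik_nonneg mu]
        sum_mult_likelihood[OF outcome_lik_nonneg mu])
  finally show ?thesis .
next
  case (Inr thh)
  then show ?thesis
    by (simp add: action_loss_def action_factor_def Qbar_dec_def if_distrib mult.commute
        sum.If_cases Compl_eq_Diff_UNIV)
qed

lemma belief_loss_Suc_alive:
  assumes mu: "mu \<in> belief_simplex"
  shows "belief_loss \<pi> (Suc n) mu 1
    = (\<Sum>a\<in>UNIV. pmf (\<pi> mu 1) a * action_factor (belief_loss \<pi> n) mu a)"
proof -
  have "belief_loss \<pi> (Suc n) mu 1
      = (\<Sum>a\<in>UNIV. pmf (\<pi> mu 1) a * (\<Sum>th\<in>UNIV. mu $ th * action_loss \<pi> n th mu a))"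
    unfolding belief_loss_def partial_loss_Suc_alive[OF one_neq_zero]
    by (simp add: sum_distrib_left mult.left_commute) (rule sum.swap)
  then show ?thesis by (simp add: belief_average_action_loss[OF mu])
qed

lemma concave_on_deadline_loss: "concave_on belief_simplex deadline_loss"
  by (simp add: concave_on_iff deadline_loss_def convex_belief_simplex sum.distrib sum_distrib_left
      algebra_simps)

lemma deadline_loss_nonneg: "mu \<in> belief_simplex \<Longrightarrow> 0 \<le> deadline_loss mu"
  unfolding deadline_loss_def
  by (auto intro!: sum_nonneg mult_nonneg_nonneg eb_nonneg belief_simplex_nonneg)

lemma action_factor_mono:
  assumes mu: "mu \<in> belief_simplex"
    and le: "\<And>x nu. x \<in> belief_simplex \<Longrightarrow> nu \<in> {0, 1} \<Longrightarrow> f x nu \<le> g x nu"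
  shows "action_factor f mu a \<le> action_factor g mu a"
  unfolding action_factor_def
  by (auto split: sum.split intro!: add_mono sum_mono le mu
      bayes_perspective_mono[OF death_lik_nonneg] bayes_perspective_mono[OF outcome_lik_nonneg])

lemma action_factor_nonneg:
  assumes mu: "mu \<in> belief_simplex"
    and nonneg: "\<And>x nu. x \<in> belief_simplex \<Longrightarrow> 0 \<le> f x nu"
  shows "0 \<le> action_factor f mu a"
proof (cases a)
  case (Inl l)
  then show ?thesis
    using acquisition_cost_pos[of l, THEN less_imp_le] unfolding action_factor_def
    by (auto intro!: add_nonneg_nonneg sum_nonneg nonneg mu
        bayes_perspective_nonneg[OF death_lik_nonneg] bayes_perspective_nonneg[OF outcome_lik_nonneg])
next
  case (Inr thh)
  then show ?thesis
    unfolding action_factor_def Qbar_dec_def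
    by (auto intro!: sum_nonneg mult_nonneg_nonneg ea_nonneg belief_simplex_nonneg[OF mu])
qed

lemma tendsto_action_factor:
  assumes mu: "mu \<in> belief_simplex"
    and lim: "\<And>x nu. x \<in> belief_simplex \<Longrightarrow> (\<lambda>n. f n x nu) \<longlonglongrightarrow> g x nu"
  shows "(\<lambda>n. action_factor (f n) mu a) \<longlonglongrightarrow> action_factor g mu a"
  unfolding action_factor_def
  by (auto split: sum.split intro!: tendsto_add tendsto_sum tendsto_const lim mu
      tendsto_bayes_perspective[OF death_lik_nonneg] tendsto_bayes_perspective[OF outcome_lik_nonneg])

lemma concave_on_action_factor:
  assumes "concave_on belief_simplex (\<lambda>x. f x 0)" and "concave_on belief_simplex (\<lambda>x. f x 1)"
  shows "concave_on belief_simplex (\<lambda>mu. action_factor f mu a)"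
  using assms unfolding action_factor_def
  by (cases a) (auto intro!: concave_on_add concave_on_sum_fun concave_on_Qbar_dec assms
      concave_on_bayes_perspective[OF death_lik_nonneg] concave_on_bayes_perspective[OF outcome_lik_nonneg]
      simp: concave_on_const convex_belief_simplex)

primrec value_iter :: "nat \<Rightarrow> real^'th \<Rightarrow> nat \<Rightarrow> real" where
  "value_iter 0 mu nu = 0"
| "value_iter (Suc n) mu nu =
    (if nu = 0 then deadline_loss mu else Min (range (action_factor (value_iter n) mu)))"

definition value_lim :: "real^'th \<Rightarrow> nat \<Rightarrow> real" where
  "value_lim mu nu = (SUP n. value_iter n mu nu)"

lemma value_iter_le_belief_loss:
  "mu \<in> belief_simplex \<Longrightarrow> nu \<in> {0, 1} \<Longrightarrow> value_iter n mu nu \<le> belief_loss \<pi> n mu nu"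
proof (induction n arbitrary: mu nu)
  case (Suc n)
  show ?case
  proof (cases "nu = 0")
    case False
    then have "nu = 1" using Suc.prems by simp
    have "value_iter (Suc n) mu 1 = Min (range (action_factor (value_iter n) mu))"
      by simp
    also have "\<dots> \<le> Min (range (action_factor (belief_loss \<pi> n) mu))"
      by (intro Min_range_mono action_factor_mono Suc.prems(1) Suc.IH) auto
    also have "\<dots> \<le> belief_loss \<pi> (Suc n) mu 1"
      unfolding belief_loss_Suc_alive[OF Suc.prems(1)] by (rule Min_range_le_pmf_average)
    finally show ?thesis using \<open>nu = 1\<close> by simp
  qed (simp add: belief_loss_Suc_deadline)
qed simp

lemma value_iter_nonneg: "mu \<in> belief_simplex \<Longrightarrow> 0 \<le> value_iter n mu nu"
  by (induction n arbitrary: mu nu)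
    (auto simp: deadline_loss_nonneg intro!: action_factor_nonneg)

lemma value_iter_mono: "mu \<in> belief_simplex \<Longrightarrow> value_iter n mu nu \<le> value_iter (Suc n) mu nu"
proof (induction n arbitrary: mu nu)
  case (Suc n)
  show ?case
  proof (cases "nu = 0")
    case False
    have "Min (range (action_factor (value_iter n) mu))
        \<le> Min (range (action_factor (value_iter (Suc n)) mu))"
      by (intro Min_range_mono action_factor_mono Suc.prems Suc.IH)
    then show ?thesis using False by (simp only: value_iter.simps if_False)
  qed simp
qed (simp only: value_iter.simps(1) value_iter_nonneg)

lemma value_iter_le_commit:
  assumes mu: "mu \<in> belief_simplex"
  shows "value_iter n mu nu \<le> deadline_loss mu + Qbar_dec ea eb thh mu 1"
proof -
  have commit: "0 \<le> Qbar_dec ea eb thh mu 1"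
    using action_factor_nonneg[OF mu, of "\<lambda>_ _. 0" "Inr thh"] by simp
  have "Min (range (action_factor (value_iter m) mu)) \<le> action_factor (value_iter m) mu (Inr thh)"
    for m by (intro Min_le finite_imageI rangeI) simp
  then show ?thesis
    using commit deadline_loss_nonneg[OF mu] by (cases n) (auto intro: add_increasing add_increasing2)
qed

lemma bdd_above_value_iter: "mu \<in> belief_simplex \<Longrightarrow> bdd_above (range (\<lambda>n. value_iter n mu nu))"
  using value_iter_le_commit by (intro bdd_aboveI2) blast

lemma LIMSEQ_value_iter: "mu \<in> belief_simplex \<Longrightarrow> (\<lambda>n. value_iter n mu nu) \<longlonglongrightarrow> value_lim mu nu"
  unfolding value_lim_def
  by (intro LIMSEQ_incseq_SUP bdd_above_value_iter incseq_SucI value_iter_mono)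

lemma value_lim_nonneg: "mu \<in> belief_simplex \<Longrightarrow> 0 \<le> value_lim mu nu"
  using LIMSEQ_value_iter by (rule LIMSEQ_le_const) (auto intro: value_iter_nonneg)

lemma value_lim_deadline: "mu \<in> belief_simplex \<Longrightarrow> value_lim mu 0 = deadline_loss mu"
  using LIMSEQ_unique[OF LIMSEQ_Suc[OF LIMSEQ_value_iter]] by simp

lemma value_lim_Bellman:
  assumes mu: "mu \<in> belief_simplex" and nu: "nu \<noteq> 0"
  shows "value_lim mu nu = Min (range (action_factor value_lim mu))"
proof (rule LIMSEQ_unique)
  show "(\<lambda>n. value_iter (Suc n) mu nu) \<longlonglongrightarrow> value_lim mu nu"
    using LIMSEQ_Suc[OF LIMSEQ_value_iter[OF mu]] .
  show "(\<lambda>n. value_iter (Suc n) mu nu) \<longlonglongrightarrow> Min (range (action_factor value_lim mu))"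
    using nu by (simp del: Min_ge_iff)
      (intro tendsto_Min tendsto_action_factor LIMSEQ_value_iter mu; simp)
qed

lemma concave_on_value_iter: "concave_on belief_simplex (\<lambda>mu. value_iter n mu nu)"
proof (induction n arbitrary: nu)
  case (Suc n)
  then show ?case
    by (cases "nu = 0")
      (simp_all add: concave_on_deadline_loss concave_on_Min_range concave_on_action_factor)
qed (simp add: concave_on_const convex_belief_simplex)

lemma concave_on_value_lim: "concave_on belief_simplex (\<lambda>mu. value_lim mu nu)"
  unfolding concave_on_iff
proof (intro conjI ballI allI impI convex_belief_simplex)
  fix x y :: "real^'th" and u v :: real
  assume x: "x \<in> belief_simplex" and y: "y \<in> belief_simplex"
    and u: "0 \<le> u" and v: "0 \<le> v" and uv: "u + v = 1"
  have m: "u *\<^sub>R x + v *\<^sub>R y \<in> belief_simplex"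
    using convexD[OF convex_belief_simplex x y u v uv] .
  show "u * value_lim x nu + v * value_lim y nu \<le> value_lim (u *\<^sub>R x + v *\<^sub>R y) nu"
  proof (rule LIMSEQ_le)
    show "(\<lambda>n. u * value_iter n x nu + v * value_iter n y nu)
        \<longlonglongrightarrow> u * value_lim x nu + v * value_lim y nu"
      by (intro tendsto_intros LIMSEQ_value_iter x y)
    show "\<exists>N. \<forall>n\<ge>N. u * value_iter n x nu + v * value_iter n y nu
        \<le> value_iter n (u *\<^sub>R x + v *\<^sub>R y) nu"
      using concave_on_value_iter x y u v uv unfolding concave_on_iff by blast
  qed (rule LIMSEQ_value_iter[OF m])
qed

definition greedy_action :: "real^'th \<Rightarrow> 'la + 'th" where
  "greedy_action mu = (SOME a. action_factor value_lim mu a = Min (range (action_factor value_lim mu)))"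

definition greedy_strategy :: "('th, 'la) strategy" where
  "greedy_strategy mu nu = return_pmf (greedy_action mu)"

lemma action_factor_greedy_action:
  "action_factor value_lim mu (greedy_action mu) = Min (range (action_factor value_lim mu))"
proof -
  have "Min (range (action_factor value_lim mu)) \<in> range (action_factor value_lim mu)"
    by (rule Min_in) auto
  then have "\<exists>a. action_factor value_lim mu a = Min (range (action_factor value_lim mu))"
    by (metis rangeE)
  then show ?thesis unfolding greedy_action_def by (rule someI_ex)
qed

lemma belief_loss_greedy_le_value_lim:
  "mu \<in> belief_simplex \<Longrightarrow> nu \<in> {0, 1} \<Longrightarrow> belief_loss greedy_strategy n mu nu \<le> value_lim mu nu"
proof (induction n arbitrary: mu nu)
  case 0
  then show ?case by (simp add: value_lim_nonneg)
next
  case (Suc n)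
  show ?case
  proof (cases "nu = 0")
    case False
    then have "nu = 1" using Suc.prems by simp
    have "belief_loss greedy_strategy (Suc n) mu 1
        = action_factor (belief_loss greedy_strategy n) mu (greedy_action mu)"
      unfolding belief_loss_Suc_alive[OF Suc.prems(1)] greedy_strategy_def
      by (simp flip: expectation_finite_type)
    also have "\<dots> \<le> action_factor value_lim mu (greedy_action mu)"
      by (intro action_factor_mono Suc.prems(1) Suc.IH)
    also have "\<dots> = value_lim mu 1"
      by (simp add: action_factor_greedy_action value_lim_Bellman[OF Suc.prems(1)])
    finally show ?thesis using \<open>nu = 1\<close> by simp
  qed (use Suc.prems in \<open>simp add: belief_loss_Suc_deadline value_lim_deadline\<close>)
qed

lemma togo_eq_SUP_belief_loss:
  assumes mu: "mu \<in> belief_simplex"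
  shows "togo p q c ea eb ec \<pi> mu nu = (SUP n. ennreal (belief_loss \<pi> n mu nu))"
proof -
  have "togo p q c ea eb ec \<pi> mu nu
      = (\<Sum>th\<in>UNIV. SUP n. ennreal (mu $ th) * ennreal (partial_loss \<pi> n (th, mu, nu, False)))"
    unfolding togo_def loss_given_eq_SUP_partial_loss by (simp add: SUP_mult_left_ennreal)
  also have "\<dots> = (SUP n. \<Sum>th\<in>UNIV. ennreal (mu $ th) * ennreal (partial_loss \<pi> n (th, mu, nu, False)))"
    by (rule ennreal_SUP_sum[symmetric])
      (auto intro!: incseq_SucI mult_left_mono ennreal_leI partial_loss_mono)
  also have "\<dots> = (SUP n. ennreal (belief_loss \<pi> n mu nu))"
    unfolding belief_loss_def using belief_simplex_nonneg[OF mu] partial_loss_nonneg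
    by (subst sum_ennreal[symmetric]) (auto intro!: sum.cong SUP_cong simp: ennreal_mult)
  finally show ?thesis .
qed

lemma Vstar_eq_value_lim:
  assumes mu: "mu \<in> belief_simplex" and nu: "nu \<in> {0, 1}"
  shows "Vstar p q c ea eb ec mu nu = value_lim mu nu"
proof -
  have "(INF \<pi>. togo p q c ea eb ec \<pi> mu nu) = ennreal (value_lim mu nu)"
  proof (rule antisym)
    have "(INF \<pi>. togo p q c ea eb ec \<pi> mu nu) \<le> togo p q c ea eb ec greedy_strategy mu nu"
      by (rule INF_lower) simp
    also have "\<dots> \<le> ennreal (value_lim mu nu)"
      unfolding togo_eq_SUP_belief_loss[OF mu]
      by (intro SUP_least ennreal_leI belief_loss_greedy_le_value_lim mu nu)
    finally show "(INF \<pi>. togo p q c ea eb ec \<pi> mu nu) \<le> ennreal (value_lim mu nu)" .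
  next
    show "ennreal (value_lim mu nu) \<le> (INF \<pi>. togo p q c ea eb ec \<pi> mu nu)"
    proof (rule INF_greatest)
      fix \<pi> :: "('th, 'la) strategy"
      show "ennreal (value_lim mu nu) \<le> togo p q c ea eb ec \<pi> mu nu"
      proof (rule LIMSEQ_le_const2)
        show "(\<lambda>n. ennreal (value_iter n mu nu)) \<longlonglongrightarrow> ennreal (value_lim mu nu)"
          by (intro tendsto_ennrealI LIMSEQ_value_iter mu)
        have "ennreal (value_iter n mu nu) \<le> (SUP n. ennreal (belief_loss \<pi> n mu nu))" for n
          using ennreal_leI[OF value_iter_le_belief_loss[OF mu nu]] by (rule SUP_upper2[OF UNIV_I])
        then show "\<exists>N. \<forall>n\<ge>N. ennreal (value_iter n mu nu) \<le> togo p q c ea eb ec \<pi> mu nu"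
          unfolding togo_eq_SUP_belief_loss[OF mu] by blast
      qed
    qed
  qed
  then show ?thesis
    unfolding Vstar_def using value_lim_nonneg[OF mu] by simp
qed

abbreviation "V \<equiv> Vstar p q c ea eb ec"

lemma concave_on_Vstar: "nu \<in> {0, 1} \<Longrightarrow> concave_on belief_simplex (\<lambda>mu. V mu nu)"
  using concave_on_cong[of belief_simplex "\<lambda>mu. V mu nu" "\<lambda>mu. value_lim mu nu"]
  by (simp add: Vstar_eq_value_lim concave_on_value_lim)

lemma Qstar_acq_alive: "Qstar_acq p q c ea eb ec l mu 1 = action_factor V mu (Inl l)"
  by (simp add: Qstar_acq_def action_factor_def bayes_perspective_def bayes_norm_def death_lik_def
      outcome_lik_def Mbar_eq_bayes_update Mpost_eq_bayes_update mult.commute)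

lemma Qstar_acq_deadline:
  "mu \<in> belief_simplex \<Longrightarrow> Qstar_acq p q c ea eb ec l mu 0 = deadline_loss mu + ec l * c l"
  by (simp add: Qstar_acq_def Vstar_eq_value_lim value_lim_deadline)

lemma concave_on_Qstar_acq:
  assumes nu: "nu \<in> {0, 1}"
  shows "concave_on belief_simplex (\<lambda>mu. Qstar_acq p q c ea eb ec l mu nu)"
proof (cases "nu = 0")
  case True
  have "concave_on belief_simplex (\<lambda>mu. deadline_loss mu + ec l * c l)"
    by (intro concave_on_add concave_on_deadline_loss) (simp add: concave_on_const convex_belief_simplex)
  then show ?thesis
    using concave_on_cong[of belief_simplex "\<lambda>mu. Qstar_acq p q c ea eb ec l mu 0"]
    by (simp add: True Qstar_acq_deadline)
next
  case False
  with nu have "nu = 1" by simp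
  show ?thesis
    unfolding \<open>nu = 1\<close> Qstar_acq_alive by (intro concave_on_action_factor concave_on_Vstar) auto
qed

lemma Qstar_eq_Min: "Qstar p q c ea eb ec mu nu = Min (range (\<lambda>l. Qstar_acq p q c ea eb ec l mu nu))"
  unfolding Qstar_def by (rule cInf_eq_Min) auto

lemma Qbar_le_Qbar_dec: "Qbar ea eb mu nu \<le> Qbar_dec ea eb thh mu nu"
  unfolding Qbar_def by (rule cINF_lower) auto

lemma concave_on_Qstar: "nu \<in> {0, 1} \<Longrightarrow> concave_on belief_simplex (\<lambda>mu. Qstar p q c ea eb ec mu nu)"
  unfolding Qstar_eq_Min by (intro concave_on_Min_range concave_on_Qstar_acq)

text \<open>At a vertex the state is known, so deciding for it costs at most the deadline loss, while
  an acquisition pays its positive cost on top of a nonnegative continuation value.\<close>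
lemma Qbar_dec_vertex_lt_Qstar_acq:
  assumes nu: "nu \<in> {0, 1}"
  shows "Qbar_dec ea eb th (vertex th) nu < Qstar_acq p q c ea eb ec l (vertex th) nu"
proof (cases "nu = 0")
  case True
  then show ?thesis
    using acquisition_cost_pos[of l]
    by (simp add: Qstar_acq_deadline vertex_in_belief_simplex Qbar_dec_def deadline_loss_def)
next
  case False
  then have "nu = 1" using nu by simp
  have "0 \<le> bayes_perspective (death_lik l) (\<lambda>x. V x 0) (vertex th)
      + (\<Sum>om\<in>UNIV. bayes_perspective (outcome_lik l om) (\<lambda>x. V x 1) (vertex th))"
    by (intro add_nonneg_nonneg sum_nonneg vertex_in_belief_simplex
        bayes_perspective_nonneg[OF death_lik_nonneg] bayes_perspective_nonneg[OF outcome_lik_nonneg])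
      (simp_all add: Vstar_def)
  then show ?thesis
    using acquisition_cost_pos[of l]
    unfolding \<open>nu = 1\<close> Qstar_acq_alive by (simp add: action_factor_def Qbar_dec_def vertex_nth)
qed

lemma Qbar_dec_vertex_lt_Qstar:
  "nu \<in> {0, 1} \<Longrightarrow> Qbar_dec ea eb th (vertex th) nu < Qstar p q c ea eb ec (vertex th) nu"
  unfolding Qstar_eq_Min by (subst Min_gr_iff) (auto intro: Qbar_dec_vertex_lt_Qstar_acq)

end

theorem proposition4:
  fixes p :: "'th::finite \<Rightarrow> 'la::finite \<Rightarrow> real"
    and q :: "'th \<Rightarrow> 'la \<Rightarrow> 'om::finite pmf"
    and c :: "'la \<Rightarrow> real"
    and ea eb :: "'th \<Rightarrow> real" and ec :: "'la \<Rightarrow> real"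
    and nu :: nat
  assumes p_bounds: "\<And>th l. 0 < p th l \<and> p th l < 1"
    and c_pos: "\<And>l. 0 < c l"
    and ea_pos: "\<And>th. 0 < ea th" and eb_pos: "\<And>th. 0 < eb th" and ec_pos: "\<And>l. 0 < ec l"
    and nu01: "nu \<in> {0, 1}"
  shows "concave_on belief_simplex (\<lambda>mu. Qstar p q c ea eb ec mu nu)
    \<and> (\<forall>th. Qstar p q c ea eb ec (vertex th) nu > Qbar ea eb (vertex th) nu)
    \<and> termination_set p q c ea eb ec nu =
           (\<Union>thh. {mu \<in> belief_simplex. Qstar p q c ea eb ec mu nu \<ge> Qbar_dec ea eb thh mu nu})
    \<and> (\<forall>thh. convex {mu \<in> belief_simplex. Qstar p q c ea eb ec mu nu \<ge> Qbar_dec ea eb thh mu nu})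
    \<and> (\<forall>thh. vertex thh \<in> {mu \<in> belief_simplex. Qstar p q c ea eb ec mu nu \<ge> Qbar_dec ea eb thh mu nu})
    \<and> (\<forall>th. vertex th \<in> termination_set p q c ea eb ec nu)"
proof -
  interpret timely_decision_problem p q c ea eb ec
    using p_bounds c_pos ea_pos eb_pos ec_pos by unfold_locales (auto intro: less_imp_le)
  have vertex_strict: "Qbar_dec ea eb th (vertex th) nu < Qstar p q c ea eb ec (vertex th) nu" for th
    by (rule Qbar_dec_vertex_lt_Qstar[OF nu01])
  have vertex_Qbar: "Qbar ea eb (vertex th) nu < Qstar p q c ea eb ec (vertex th) nu" for th
    using Qbar_le_Qbar_dec vertex_strict by (rule le_less_trans)
  show ?thesis
  proof (intro conjI allI)
    show "termination_set p q c ea eb ec nu =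
        (\<Union>thh. {mu \<in> belief_simplex. Qstar p q c ea eb ec mu nu \<ge> Qbar_dec ea eb thh mu nu})"
      unfolding termination_set_def Qbar_def by (auto simp: cInf_eq_Min Min_le_iff)
    show "convex {mu \<in> belief_simplex. Qstar p q c ea eb ec mu nu \<ge> Qbar_dec ea eb thh mu nu}" for thh
      by (rule convex_Collect_convex_le_concave[OF concave_on_Qstar[OF nu01] convex_on_Qbar_dec])
  qed (use nu01 vertex_strict vertex_Qbar in
      \<open>auto simp: concave_on_Qstar termination_set_def vertex_in_belief_simplex less_imp_le\<close>)
qed

end
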